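(* Let $(x,y,z)(\eta_1)$ be a trajectory of system (S2) such that there is $\eta_{1,*}\in\mathbb{R}$ with $x(\eta_{1,*})>0$, $z(\eta_{1,*})>0$ and $$-\frac{\sigma+2}{p-m}<y(\eta_1)<0\qquad\text{for all }\eta_1>\eta_{1,*}.$$ Then, in the variables $(X,Y,Z)=(1/x,y/x,z/x)$, the trajectory converges as $\eta_1\to\infty$ either to $P_1=(0,0,0)$ or to $P_{\gamma_0}=(0,0,\gamma_0)$, where $\gamma_0=\frac{1}{\alpha(p-1)}$.
   Context: Let $N\geq1$, $m>1$, $\sigma>0$, $p>m$, $L=\sigma(m-1)+2(p-1)$, $\alpha=(\sigma+2)/L$. System (S2) is $$\dot x=x(2-(m-1)y),\quad \dot y=-x-(N-2)y+z-my^2-\tfrac{p-m}{\sigma+2}xy,\quad \dot z=z(\sigma+2+(p-m)y),$$ and under $X=1/x$, $Y=y/x$, $Z=z/x$ it is equivalent (up to time change) to system (S1): $$\dot X=X[(m-1)Y-2X],\quad \dot Y=-Y^2-\tfrac{p-m}{\sigma+2}Y-X-NXY+XZ,\quad \dot Z=Z[(p-1)Y+\sigma X].$$ *)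

theory Defs
  imports "HOL-Analysis.Analysis"
begin

definition L_const :: "real \<Rightarrow> real \<Rightarrow> real \<Rightarrow> real" where
  "L_const m p \<sigma> = \<sigma> * (m - 1) + 2 * (p - 1)"

definition alpha_const :: "real \<Rightarrow> real \<Rightarrow> real \<Rightarrow> real" where
  "alpha_const m p \<sigma> = (\<sigma> + 2) / L_const m p \<sigma>"

definition gamma0 :: "real \<Rightarrow> real \<Rightarrow> real \<Rightarrow> real" where
  "gamma0 m p \<sigma> = 1 / (alpha_const m p \<sigma> * (p - 1))"

definition S2_solution_on ::
  "nat \<Rightarrow> real \<Rightarrow> real \<Rightarrow> real \<Rightarrow> (real \<Rightarrow> real) \<Rightarrow> (real \<Rightarrow> real) \<Rightarrow> (real \<Rightarrow> real) \<Rightarrow> real \<Rightarrow> bool"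
  where
  "S2_solution_on N m p \<sigma> x y z t0 \<longleftrightarrow>
     (\<forall>t\<ge>t0.
        (x has_real_derivative x t * (2 - (m - 1) * y t)) (at t within {t0..}) \<and>
        (y has_real_derivative
            (- x t - (real N - 2) * y t + z t - m * (y t)^2 - (p - m) / (\<sigma> + 2) * x t * y t))
          (at t within {t0..}) \<and>
        (z has_real_derivative z t * (\<sigma> + 2 + (p - m) * y t)) (at t within {t0..}))"

end

theory Submission
  imports Defs
begin

(*
  Along the trajectory x grows at least like e^(2t), since y < 0. Put Z = z/x and
  c = (p - m)/(sigma + 2). The quantity F = Z - 1 - c y obeys a linear equation
  F' = G(y) - (c x - sigma - (p - 1) y) F whose forcing G(y) is bounded (y stays in (-1/c, 0))
  and whose damping coefficient tends to infinity with x; hence F -> 0. In terms of F,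
  Z' = Z (sigma + (p - 1) y) becomes the perturbed logistic equation Z' = k Z (Z - gamma0 - F)
  with k > 0. Since Z < 1 + F is bounded and gamma0 is repelling, Z tends to 0 or to gamma0,
  while 1/x and y/x tend to 0.
*)


lemma stays_below_if_deriv_neg_at_level:
  fixes u u' :: "real \<Rightarrow> real"
  assumes deriv: "\<forall>t\<ge>s. (u has_real_derivative u' t) (at t)"
    and start: "u s < e" and level: "\<forall>t\<ge>s. u t = e \<longrightarrow> u' t < 0"
  shows "\<forall>t\<ge>s. u t < e"
proof (rule ccontr)
  assume "\<not> (\<forall>t\<ge>s. u t < e)"
  then obtain t1 where t1: "s \<le> t1" "e \<le> u t1" by (auto simp: not_less)
  have cont: "continuous_on {s..t1} u"
    using deriv by (intro continuous_at_imp_continuous_on ballI DERIV_isCont) auto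
  define S where "S = {s..t1} \<inter> u -` {e..}"
  define r where "r = Inf S"
  have "closed S" unfolding S_def by (rule continuous_closed_preimage[OF cont]) auto
  moreover have "S \<noteq> {}" "bdd_below S" using t1 unfolding S_def by (auto intro: bdd_belowI[of _ s])
  ultimately have r: "r \<in> S" and r_min: "\<And>t. t \<in> S \<Longrightarrow> r \<le> t"
    unfolding r_def by (auto intro: closed_contains_Inf cInf_lower)
  then have "s \<le> r" "r \<le> t1" "e \<le> u r" unfolding S_def by auto
  then have "s < r" using start by (cases "r = s") auto
  have "u r = e"
  proof -
    have "continuous_on {s..r} u" using \<open>r \<le> t1\<close> by (intro continuous_on_subset[OF cont]) auto
    then obtain t' where "s \<le> t'" "t' \<le> r" "u t' = e"
      using IVT'[of u s e r] start \<open>e \<le> u r\<close> \<open>s \<le> r\<close> by force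
    with r_min[of t'] \<open>r \<le> t1\<close> show ?thesis unfolding S_def by force
  qed
  then have "u' r < 0" using level \<open>s < r\<close> by auto
  then obtain d where "d > 0" and left: "\<And>h. 0 < h \<Longrightarrow> h < d \<Longrightarrow> u r < u (r - h)"
    using DERIV_neg_dec_left[of u "u' r" r] deriv \<open>s < r\<close> by force
  define h where "h = min (d/2) (r - s)"
  have "0 < h" "h < d" "h \<le> r - s" using \<open>d > 0\<close> \<open>s < r\<close> unfolding h_def by auto
  then have "r - h \<in> S" using left \<open>u r = e\<close> \<open>r \<le> t1\<close> unfolding S_def by force
  then show False using r_min \<open>0 < h\<close> by force
qed

lemma eventually_below_if_deriv_le_neg:
  fixes u u' :: "real \<Rightarrow> real"
  assumes deriv: "\<forall>t\<ge>T. (u has_real_derivative u' t) (at t)"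
    and "\<delta> > 0" and decay: "\<forall>t\<ge>T. e \<le> u t \<longrightarrow> u' t \<le> -\<delta>"
  shows "eventually (\<lambda>t. u t < e) at_top"
proof -
  obtain s where "T \<le> s" "u s < e"
  proof (rule ccontr)
    assume "\<not> thesis"
    then have above: "\<forall>t\<ge>T. e \<le> u t" using that by (meson not_less)
    define t1 where "t1 = T + (u T - e) / \<delta> + 1"
    have "0 \<le> (u T - e) / \<delta>" using above \<open>\<delta> > 0\<close> by simp
    then have "T < t1" unfolding t1_def by simp
    then obtain \<xi> where "T < \<xi>" "\<xi> < t1" "u t1 - u T = (t1 - T) * u' \<xi>"
      using MVT2[of T t1 u u'] deriv by force
    moreover have "u' \<xi> \<le> -\<delta>" using decay above \<open>T < \<xi>\<close> by auto
    ultimately have "u t1 \<le> u T - (t1 - T) * \<delta>"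
      using mult_left_mono[of "u' \<xi>" "-\<delta>" "t1 - T"] by auto
    also have "\<dots> = e - \<delta>" unfolding t1_def using \<open>\<delta> > 0\<close> by (simp add: field_simps)
    finally have "u t1 < e" using \<open>\<delta> > 0\<close> by linarith
    then show False using above[rule_format, of t1] \<open>T < t1\<close> by simp
  qed
  moreover have "\<forall>t\<ge>s. u t < e"
  proof (rule stays_below_if_deriv_neg_at_level[where u' = u'])
    show "\<forall>t\<ge>s. u t = e \<longrightarrow> u' t < 0"
    proof (intro allI impI)
      fix t assume "s \<le> t" "u t = e"
      then have "u' t \<le> -\<delta>" using decay \<open>T \<le> s\<close> by simp
      then show "u' t < 0" using \<open>\<delta> > 0\<close> by simp
    qed
  qed (use \<open>T \<le> s\<close> \<open>u s < e\<close> deriv in auto)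
  ultimately show ?thesis unfolding eventually_at_top_linorder by blast
qed

lemma linear_lower_bound_if_deriv_ge:
  fixes u u' :: "real \<Rightarrow> real"
  assumes deriv: "\<forall>t\<ge>s. (u has_real_derivative u' t) (at t)"
    and slope: "\<forall>t\<ge>s. \<eta> \<le> u' t" and "s \<le> t"
  shows "u s + \<eta> * (t - s) \<le> u t"
proof (cases "s = t")
  case False
  then obtain \<xi> where "s < \<xi>" "u t - u s = (t - s) * u' \<xi>"
    using MVT2[of s t u u'] deriv \<open>s \<le> t\<close> by force
  moreover have "(t - s) * \<eta> \<le> (t - s) * u' \<xi>"
    using slope \<open>s < \<xi>\<close> \<open>s \<le> t\<close> by (intro mult_left_mono) auto
  ultimately show ?thesis by (simp add: algebra_simps)
qed simp

lemma damped_eventually_less: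
  fixes u g a :: "real \<Rightarrow> real"
  assumes deriv: "\<forall>t\<ge>T. (u has_real_derivative g t - a t * u t) (at t)"
    and bound: "\<forall>t\<ge>T. \<bar>g t\<bar> \<le> B" and damping: "filterlim a at_top at_top"
    and "\<epsilon> > 0"
  shows "eventually (\<lambda>t. u t < \<epsilon>) at_top"
proof -
  have "B \<ge> 0" using bound[rule_format, of T] by linarith
  from damping have "eventually (\<lambda>t. (B + 1) / \<epsilon> \<le> a t) at_top"
    by (simp add: filterlim_at_top)
  then obtain T' where T': "T \<le> T'" "\<forall>t\<ge>T'. (B + 1) / \<epsilon> \<le> a t"
    unfolding eventually_at_top_linorder by (metis order.trans nle_le)
  show ?thesis
  proof (rule eventually_below_if_deriv_le_neg[of T' u _ 1])
    show "\<forall>t\<ge>T'. \<epsilon> \<le> u t \<longrightarrow> g t - a t * u t \<le> - 1"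
    proof (intro allI impI)
      fix t assume "T' \<le> t" "\<epsilon> \<le> u t"
      then have "B + 1 \<le> a t * \<epsilon>" using T' \<open>\<epsilon> > 0\<close> by (auto simp: field_simps)
      also have "\<dots> \<le> a t * u t"
      proof (rule mult_left_mono[OF \<open>\<epsilon> \<le> u t\<close>])
        show "0 \<le> a t"
          using \<open>B + 1 \<le> a t * \<epsilon>\<close> \<open>B \<ge> 0\<close> \<open>\<epsilon> > 0\<close>
          by (smt (verit) mult_nonpos_nonneg)
      qed
      finally have "B + 1 \<le> a t * u t" .
      moreover have "\<bar>g t\<bar> \<le> B" using bound T' \<open>T' \<le> t\<close> by simp
      ultimately show "g t - a t * u t \<le> - 1" by linarith
    qed
  qed (use deriv T' in auto)
qed

lemma tendsto_zero_if_damped: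
  fixes u g a :: "real \<Rightarrow> real"
  assumes deriv: "\<forall>t\<ge>T. (u has_real_derivative g t - a t * u t) (at t)"
    and bound: "\<forall>t\<ge>T. \<bar>g t\<bar> \<le> B" and damping: "filterlim a at_top at_top"
  shows "(u \<longlongrightarrow> 0) at_top"
proof (rule tendstoI)
  fix \<epsilon> :: real assume "\<epsilon> > 0"
  have "eventually (\<lambda>t. u t < \<epsilon>) at_top"
    using damped_eventually_less[OF deriv bound damping \<open>\<epsilon> > 0\<close>] .
  moreover have "eventually (\<lambda>t. - u t < \<epsilon>) at_top"
  proof (rule damped_eventually_less[OF _ _ damping \<open>\<epsilon> > 0\<close>])
    show "\<forall>t\<ge>T. ((\<lambda>t. - u t) has_real_derivative - g t - a t * - u t) (at t)"
      using deriv by (auto intro: derivative_eq_intros)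
  qed (use bound in auto)
  ultimately show "eventually (\<lambda>t. dist (u t) 0 < \<epsilon>) at_top"
    by eventually_elim auto
qed

lemma DERIV_at_if_within_atLeast:
  "(f has_real_derivative D) (at t within {t0..}) \<Longrightarrow> t0 < t \<Longrightarrow> (f has_real_derivative D) (at t)"
  using at_within_interior[of t "{t0..}"] interior_Ici[of "t0 - 1" t0] by simp

lemma exp_growth_lower_bound:
  fixes f a :: "real \<Rightarrow> real"
  assumes deriv: "\<forall>t\<ge>r. (f has_real_derivative f t * a t) (at t within {r..})"
    and rate: "\<forall>t>r. k \<le> a t" and "0 < f r" and "r \<le> t"
  shows "f r * exp (k * (t - r)) \<le> f t"
proof -
  have cont: "continuous_on {r..t'} f" for t'
  proof -
    have "continuous_on {r..} f"
      unfolding continuous_on_eq_continuous_within using deriv DERIV_continuous by blast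
    then show ?thesis by (rule continuous_on_subset) auto
  qed
  \<comment> \<open>Squaring makes the monotonicity argument independent of the sign of \<open>f\<close>.\<close>
  define q where "q s = (f s)\<^sup>2 * exp (- 2 * k * s)" for s
  have squares: "(f r * exp (k * (t' - r)))\<^sup>2 \<le> (f t')\<^sup>2" if "r \<le> t'" for t'
  proof -
    have "q r \<le> q t'"
    proof (rule DERIV_nonneg_imp_increasing_open[OF that])
      fix s assume "r < s" "s < t'"
      then have "(f has_real_derivative f s * a s) (at s)"
        using deriv \<open>r < s\<close> by (intro DERIV_at_if_within_atLeast[of _ _ _ r]) auto
      then have "(q has_real_derivative 2 * (f s)\<^sup>2 * exp (- 2 * k * s) * (a s - k)) (at s)"
        unfolding q_def by (auto intro!: derivative_eq_intros simp: algebra_simps power2_eq_square)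
      moreover have "0 \<le> 2 * (f s)\<^sup>2 * exp (- 2 * k * s) * (a s - k)"
        using rate \<open>r < s\<close> by simp
      ultimately show "\<exists>y. (q has_real_derivative y) (at s) \<and> 0 \<le> y" by blast
    qed (unfold q_def, intro continuous_intros cont)
    moreover have "exp (- 2 * k * r) = (exp (k * (t' - r)))\<^sup>2 * exp (- 2 * k * t')"
      by (simp add: exp_add[symmetric] power2_eq_square algebra_simps)
    ultimately show ?thesis unfolding q_def by (simp add: power_mult_distrib mult.assoc)
  qed
  have pos: "0 < f t'" if t': "r \<le> t'" for t'
  proof (rule ccontr)
    assume "\<not> 0 < f t'"
    then obtain s where "r \<le> s" "s \<le> t'" "f s = 0"
      using IVT2'[of f t' 0 r, OF _ _ t' cont] \<open>0 < f r\<close> by auto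
    then show False using squares[of s] \<open>0 < f r\<close> by simp
  qed
  show ?thesis
    using power2_le_imp_le[OF squares] pos \<open>r \<le> t\<close> less_imp_le by blast
qed

locale perturbed_logistic =
  fixes Z F :: "real \<Rightarrow> real" and k g T C :: real
  assumes deriv: "\<forall>t\<ge>T. (Z has_real_derivative k * Z t * (Z t - g - F t)) (at t)"
    and pos: "\<forall>t\<ge>T. 0 < Z t" and bounded: "\<forall>t\<ge>T. Z t \<le> C"
    and rate_pos: "0 < k" and equilibrium_nonneg: "0 \<le> g"
    and perturbation: "(F \<longlongrightarrow> 0) at_top"
begin

lemma eventually_perturbation_small:
  assumes "0 < \<epsilon>"
  obtains s where "T \<le> s" "\<forall>t\<ge>s. \<bar>F t\<bar> < \<epsilon>"
proof -
  have "eventually (\<lambda>t. \<bar>F t\<bar> < \<epsilon> \<and> T \<le> t) at_top"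
    using order_tendstoD[OF tendsto_rabs[OF perturbation], of \<epsilon>] \<open>0 < \<epsilon>\<close>
    by (auto intro: eventually_conj eventually_ge_at_top)
  then obtain s where "\<forall>t\<ge>s. \<bar>F t\<bar> < \<epsilon> \<and> T \<le> t" unfolding eventually_at_top_linorder by blast
  then show ?thesis using that[of s] by simp
qed

lemma eventually_less_equilibrium_plus:
  assumes "0 < \<delta>"
  shows "eventually (\<lambda>t. Z t < g + \<delta>) at_top"
proof (rule ccontr)
  assume escape: "\<not> eventually (\<lambda>t. Z t < g + \<delta>) at_top"
  obtain s0 where "T \<le> s0" and small: "\<forall>t\<ge>s0. \<bar>F t\<bar> < \<delta>/4"
    using eventually_perturbation_small \<open>0 < \<delta>\<close> by (metis zero_less_divide_iff zero_less_numeral)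
  then obtain s where "s0 \<le> s" "g + \<delta> \<le> Z s"
    using escape unfolding eventually_at_top_linorder by (meson not_less)
  have deriv_s: "\<forall>t\<ge>s. (Z has_real_derivative k * Z t * (Z t - g - F t)) (at t)"
    using deriv \<open>T \<le> s0\<close> \<open>s0 \<le> s\<close> by simp
  \<comment> \<open>Above the repelling equilibrium \<open>g\<close> the solution is pushed upwards at a uniform rate.\<close>
  have above: "\<forall>t\<ge>s. - Z t < - (g + \<delta>/2)"
  proof (rule stays_below_if_deriv_neg_at_level[where u' = "\<lambda>t. - (k * Z t * (Z t - g - F t))"])
    show "\<forall>t\<ge>s. ((\<lambda>t. - Z t) has_real_derivative - (k * Z t * (Z t - g - F t))) (at t)"
      using deriv_s by (auto intro: DERIV_minus)
    show "\<forall>t\<ge>s. - Z t = - (g + \<delta>/2) \<longrightarrow> - (k * Z t * (Z t - g - F t)) < 0"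
    proof (intro allI impI)
      fix t assume "s \<le> t" "- Z t = - (g + \<delta>/2)"
      moreover have "\<bar>F t\<bar> < \<delta>/4" using small \<open>s0 \<le> s\<close> \<open>s \<le> t\<close> by simp
      ultimately have "0 < Z t - g - F t" by (simp add: abs_less_iff)
      moreover have "0 < k * Z t" using pos \<open>T \<le> s0\<close> \<open>s0 \<le> s\<close> \<open>s \<le> t\<close> rate_pos by simp
      ultimately show "- (k * Z t * (Z t - g - F t)) < 0" by simp
    qed
  qed (use \<open>g + \<delta> \<le> Z s\<close> \<open>0 < \<delta>\<close> in simp)
  define \<eta> where "\<eta> = k * (g + \<delta>/2) * (\<delta>/4)"
  have "0 < \<eta>" unfolding \<eta>_def using rate_pos equilibrium_nonneg \<open>0 < \<delta>\<close> by simp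
  have "\<forall>t\<ge>s. \<eta> \<le> k * Z t * (Z t - g - F t)"
  proof (intro allI impI)
    fix t assume "s \<le> t"
    then have "g + \<delta>/2 < Z t" "\<bar>F t\<bar> < \<delta>/4" using above small \<open>s0 \<le> s\<close> by auto
    then have "g + \<delta>/2 < Z t" "\<delta>/4 \<le> Z t - g - F t" by (auto simp: abs_less_iff)
    then show "\<eta> \<le> k * Z t * (Z t - g - F t)"
      unfolding \<eta>_def using rate_pos equilibrium_nonneg \<open>0 < \<delta>\<close>
      by (intro mult_mono) auto
  qed
  then have "Z s + \<eta> * (t - s) \<le> Z t" if "s \<le> t" for t
    using linear_lower_bound_if_deriv_ge[OF deriv_s _ that] by blast
  moreover define t1 where "t1 = s + (C - Z s + 1) / \<eta>"
  moreover have "s \<le> t1"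
    using bounded \<open>T \<le> s0\<close> \<open>s0 \<le> s\<close> \<open>0 < \<eta>\<close> by (auto simp: t1_def)
  moreover have "Z t1 \<le> C" using bounded \<open>T \<le> s0\<close> \<open>s0 \<le> s\<close> \<open>s \<le> t1\<close> by simp
  ultimately show False using \<open>0 < \<eta>\<close> by fastforce
qed

lemma tendsto_zero_if_below_equilibrium:
  assumes "0 < \<delta>" "T \<le> s" and small: "\<forall>t\<ge>s. \<bar>F t\<bar> < \<delta>/4" and "Z s \<le> g - \<delta>"
  shows "(Z \<longlongrightarrow> 0) at_top"
proof (rule tendstoI)
  fix \<epsilon> :: real assume "0 < \<epsilon>"
  have deriv_s: "\<forall>t\<ge>s. (Z has_real_derivative k * Z t * (Z t - g - F t)) (at t)"
    using deriv \<open>T \<le> s\<close> by simp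
  have below: "\<forall>t\<ge>s. Z t < g - \<delta>/2"
  proof (rule stays_below_if_deriv_neg_at_level[OF deriv_s])
    show "\<forall>t\<ge>s. Z t = g - \<delta>/2 \<longrightarrow> k * Z t * (Z t - g - F t) < 0"
    proof (intro allI impI)
      fix t assume "s \<le> t" "Z t = g - \<delta>/2"
      moreover have "\<bar>F t\<bar> < \<delta>/4" using small \<open>s \<le> t\<close> by simp
      ultimately have "Z t - g - F t < 0" by (simp add: abs_less_iff)
      moreover have "0 < k * Z t" using pos \<open>T \<le> s\<close> \<open>s \<le> t\<close> rate_pos by simp
      ultimately show "k * Z t * (Z t - g - F t) < 0" by (simp add: mult_pos_neg)
    qed
  qed (use \<open>Z s \<le> g - \<delta>\<close> \<open>0 < \<delta>\<close> in simp)
  have "eventually (\<lambda>t. Z t < \<epsilon>) at_top"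
  proof (rule eventually_below_if_deriv_le_neg[OF deriv_s])
    show "\<forall>t\<ge>s. \<epsilon> \<le> Z t \<longrightarrow> k * Z t * (Z t - g - F t) \<le> - (k * \<epsilon> * (\<delta>/4))"
    proof (intro allI impI)
      fix t assume "s \<le> t" "\<epsilon> \<le> Z t"
      then have "Z t < g - \<delta>/2" "\<bar>F t\<bar> < \<delta>/4" using below small by auto
      then have "\<delta>/4 \<le> - (Z t - g - F t)" by (auto simp: abs_less_iff)
      then have "k * \<epsilon> * (\<delta>/4) \<le> k * Z t * - (Z t - g - F t)"
        using \<open>\<epsilon> \<le> Z t\<close> \<open>0 < \<epsilon>\<close> \<open>0 < \<delta>\<close> rate_pos by (intro mult_mono) auto
      then show "k * Z t * (Z t - g - F t) \<le> - (k * \<epsilon> * (\<delta>/4))"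
        by (simp only: mult_minus_right)
    qed
  qed (use \<open>0 < \<epsilon>\<close> \<open>0 < \<delta>\<close> rate_pos in simp)
  moreover have "eventually (\<lambda>t. 0 < Z t) at_top"
    using pos unfolding eventually_at_top_linorder by blast
  ultimately show "eventually (\<lambda>t. dist (Z t) 0 < \<epsilon>) at_top"
    by eventually_elim simp
qed

lemma tendsto_zero_or_equilibrium: "(Z \<longlongrightarrow> 0) at_top \<or> (Z \<longlongrightarrow> g) at_top"
proof (cases "\<forall>\<delta>>0. eventually (\<lambda>t. g - \<delta> < Z t) at_top")
  case True
  have "(Z \<longlongrightarrow> g) at_top"
  proof (rule tendstoI)
    fix \<epsilon> :: real assume "0 < \<epsilon>"
    with True have "eventually (\<lambda>t. g - \<epsilon> < Z t \<and> Z t < g + \<epsilon>) at_top"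
      by (intro eventually_conj eventually_less_equilibrium_plus) auto
    then show "eventually (\<lambda>t. dist (Z t) g < \<epsilon>) at_top"
      by eventually_elim (simp add: dist_real_def abs_less_iff)
  qed
  then show ?thesis ..
next
  case False
  then obtain \<delta> where "0 < \<delta>" and dips: "\<not> eventually (\<lambda>t. g - \<delta> < Z t) at_top" by blast
  obtain s0 where "T \<le> s0" and small: "\<forall>t\<ge>s0. \<bar>F t\<bar> < \<delta>/4"
    using eventually_perturbation_small \<open>0 < \<delta>\<close> by (metis zero_less_divide_iff zero_less_numeral)
  moreover obtain s where "s0 \<le> s" "Z s \<le> g - \<delta>"
    using dips unfolding eventually_at_top_linorder by (meson not_less)
  ultimately have "(Z \<longlongrightarrow> 0) at_top"
    by (intro tendsto_zero_if_below_equilibrium[OF \<open>0 < \<delta>\<close>, of s]) auto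
  then show ?thesis ..
qed

end

locale S2_trapped =
  fixes N :: nat and m p \<sigma> t0 :: real and x y z :: "real \<Rightarrow> real"
  assumes m: "1 < m" and \<sigma>: "0 < \<sigma>" and p: "m < p"
    and sol: "S2_solution_on N m p \<sigma> x y z t0"
    and x0: "0 < x t0" and z0: "0 < z t0"
    and y_bounds: "\<forall>t>t0. - (\<sigma> + 2) / (p - m) < y t \<and> y t < 0"
begin

definition c :: real where "c = (p - m) / (\<sigma> + 2)"

lemma c_pos: "0 < c"
  using \<sigma> p unfolding c_def by simp

lemma y_neg: "t0 < t \<Longrightarrow> y t < 0"
  using y_bounds by simp

lemma c_mult_y_gt_minus_one: "t0 < t \<Longrightarrow> -1 < c * y t"
  using y_bounds[rule_format, of t] \<sigma> p unfolding c_def by (simp add: field_simps)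

lemma x_deriv: "t0 < t \<Longrightarrow> (x has_real_derivative x t * (2 - (m - 1) * y t)) (at t)"
  and y_deriv: "t0 < t \<Longrightarrow> (y has_real_derivative
      - x t - (real N - 2) * y t + z t - m * (y t)\<^sup>2 - (p - m) / (\<sigma> + 2) * x t * y t) (at t)"
  and z_deriv: "t0 < t \<Longrightarrow> (z has_real_derivative z t * (\<sigma> + 2 + (p - m) * y t)) (at t)"
  using sol unfolding S2_solution_on_def by (auto intro: DERIV_at_if_within_atLeast[of _ _ t t0])

lemma x_lower_bound:
  assumes "t0 \<le> t"
  shows "x t0 * exp (2 * (t - t0)) \<le> x t"
proof (rule exp_growth_lower_bound[where a = "\<lambda>t. 2 - (m - 1) * y t" and f = x and r = t0, OF _ _ x0 assms])
  show "\<forall>t>t0. 2 \<le> 2 - (m - 1) * y t"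
    using y_neg m by (simp add: mult_pos_neg less_imp_le)
qed (use sol in \<open>auto simp: S2_solution_on_def\<close>)

lemma x_pos: "t0 \<le> t \<Longrightarrow> 0 < x t"
  using x_lower_bound[of t] x0 by (smt (verit) exp_gt_zero mult_pos_pos)

lemma z_pos: "t0 \<le> t \<Longrightarrow> 0 < z t"
proof -
  assume "t0 \<le> t"
  have "z t0 * exp (0 * (t - t0)) \<le> z t"
  proof (rule exp_growth_lower_bound[where a = "\<lambda>t. \<sigma> + 2 + (p - m) * y t" and f = z and r = t0, OF _ _ z0 \<open>t0 \<le> t\<close>])
    show "\<forall>t>t0. 0 \<le> \<sigma> + 2 + (p - m) * y t"
      using c_mult_y_gt_minus_one \<sigma> p unfolding c_def by (force simp: field_simps)
  qed (use sol in \<open>auto simp: S2_solution_on_def\<close>)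
  then show ?thesis using z0 by simp
qed

lemma x_at_top: "filterlim x at_top at_top"
proof (rule filterlim_at_top_mono)
  show "LIM t at_top. x t0 * exp (2 * (t - t0)) :> at_top"
    using x0
    by (intro filterlim_tendsto_pos_mult_at_top[OF tendsto_const] filterlim_compose[OF exp_at_top]
        filterlim_tendsto_pos_mult_at_top[OF tendsto_const])
      (auto intro: filterlim_at_top_mono[OF filterlim_tendsto_add_at_top[OF tendsto_const[of "-t0"] filterlim_ident]])
  show "eventually (\<lambda>t. x t0 * exp (2 * (t - t0)) \<le> x t) at_top"
    unfolding eventually_at_top_linorder using x_lower_bound by blast
qed

definition Z :: "real \<Rightarrow> real" where "Z t = z t / x t"

definition F :: "real \<Rightarrow> real" where "F t = Z t - 1 - c * y t"

lemma Z_deriv: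
  assumes "t0 < t"
  shows "(Z has_real_derivative Z t * (\<sigma> + (p - 1) * y t)) (at t)"
proof -
  have "x t \<noteq> 0" using x_pos[of t] assms by simp
  have "(Z has_real_derivative
      (z t * (\<sigma> + 2 + (p - m) * y t) * x t - z t * (x t * (2 - (m - 1) * y t))) / (x t * x t)) (at t)"
    unfolding Z_def[abs_def] using z_deriv x_deriv assms \<open>x t \<noteq> 0\<close> by (intro DERIV_divide)
  moreover have "(z t * (\<sigma> + 2 + (p - m) * y t) * x t - z t * (x t * (2 - (m - 1) * y t))) / (x t * x t)
      = Z t * (\<sigma> + (p - 1) * y t)"
    using \<open>x t \<noteq> 0\<close> by (simp add: Z_def field_simps)
  ultimately show ?thesis by simp
qed

definition G :: "real \<Rightarrow> real" where
  "G v = (1 + c * v) * (\<sigma> + (p - 1) * v) + c * ((real N - 2) * v + m * v\<^sup>2)"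

lemma F_deriv:
  assumes "t0 < t"
  shows "(F has_real_derivative G (y t) - (c * x t - \<sigma> - (p - 1) * y t) * F t) (at t)"
proof -
  have "x t \<noteq> 0" using x_pos[of t] assms by simp
  have "(F has_real_derivative Z t * (\<sigma> + (p - 1) * y t) - 0 - c *
      (- x t - (real N - 2) * y t + z t - m * (y t)\<^sup>2 - (p - m) / (\<sigma> + 2) * x t * y t)) (at t)"
    unfolding F_def[abs_def]
    by (intro DERIV_diff DERIV_cmult DERIV_const Z_deriv[OF assms] y_deriv[OF assms])
  moreover have "z t = x t * Z t" using \<open>x t \<noteq> 0\<close> by (simp add: Z_def)
  ultimately show ?thesis
    by (simp add: F_def G_def c_def[symmetric] algebra_simps power2_eq_square)
qed

lemma G_bounded: "\<exists>B. \<forall>t>t0. \<bar>G (y t)\<bar> \<le> B"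
proof -
  have "continuous_on {-1/c..0} G" unfolding G_def by (intro continuous_intros)
  then have "bounded (G ` {-1/c..0})" by (intro compact_imp_bounded compact_continuous_image) auto
  then obtain B where "\<forall>v\<in>{-1/c..0}. \<bar>G v\<bar> \<le> B" unfolding bounded_iff by auto
  moreover have "y t \<in> {-1/c..0}" if "t0 < t" for t
    using c_mult_y_gt_minus_one[OF that] y_neg[OF that] c_pos by (auto simp: field_simps)
  ultimately show ?thesis by blast
qed

lemma F_tendsto_zero: "(F \<longlongrightarrow> 0) at_top"
proof -
  obtain B where B: "\<forall>t>t0. \<bar>G (y t)\<bar> \<le> B" using G_bounded by blast
  have "filterlim (\<lambda>t. c * x t - \<sigma> - (p - 1) * y t) at_top at_top"
  proof (rule filterlim_at_top_mono)
    show "LIM t at_top. - \<sigma> + c * x t :> at_top"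
      by (intro filterlim_tendsto_add_at_top[OF tendsto_const]
          filterlim_tendsto_pos_mult_at_top[OF tendsto_const c_pos x_at_top])
    show "eventually (\<lambda>t. - \<sigma> + c * x t \<le> c * x t - \<sigma> - (p - 1) * y t) at_top"
    proof (rule eventually_mono[OF eventually_gt_at_top[of t0]])
      fix t assume "t0 < t"
      then have "(p - 1) * y t \<le> 0" using y_neg m p by (simp add: mult_pos_neg less_imp_le)
      then show "- \<sigma> + c * x t \<le> c * x t - \<sigma> - (p - 1) * y t" by simp
    qed
  qed
  then show ?thesis
    using F_deriv B
    by (intro tendsto_zero_if_damped[where T = "t0 + 1" and B = B and g = "\<lambda>t. G (y t)"
          and a = "\<lambda>t. c * x t - \<sigma> - (p - 1) * y t"]) auto
qed

lemma L_const_pos: "0 < L_const m p \<sigma>"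
  using m \<sigma> p unfolding L_const_def by (simp add: add_pos_pos)

lemma gamma0_eq: "gamma0 m p \<sigma> = L_const m p \<sigma> / ((\<sigma> + 2) * (p - 1))"
  using L_const_pos unfolding gamma0_def alpha_const_def by simp

lemma gamma0_pos: "0 < gamma0 m p \<sigma>"
  using L_const_pos m \<sigma> p unfolding gamma0_eq by simp

lemma one_minus_gamma0: "1 - gamma0 m p \<sigma> = c * \<sigma> / (p - 1)"
proof -
  have "(\<sigma> + 2) * (p - 1) - L_const m p \<sigma> = \<sigma> * (p - m)"
    unfolding L_const_def by (simp add: algebra_simps)
  moreover have "(\<sigma> + 2) * (p - 1) \<noteq> 0" using m \<sigma> p by simp
  ultimately show ?thesis unfolding gamma0_eq c_def
    by (simp add: diff_divide_distrib[symmetric] divide_simps)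
qed

definition k :: real where "k = (p - 1) / c"

lemma Z_logistic_deriv:
  assumes "t0 < t"
  shows "(Z has_real_derivative k * Z t * (Z t - gamma0 m p \<sigma> - F t)) (at t)"
proof -
  have "\<sigma> + (p - 1) * y t = k * (Z t - gamma0 m p \<sigma> - F t)"
    using one_minus_gamma0 c_pos m p unfolding k_def F_def by (simp add: field_simps)
  then show ?thesis using Z_deriv[OF assms] by (simp add: ac_simps)
qed

lemma Z_tendsto: "(Z \<longlongrightarrow> 0) at_top \<or> (Z \<longlongrightarrow> gamma0 m p \<sigma>) at_top"
proof -
  have "eventually (\<lambda>t. F t < 1 \<and> t0 + 1 \<le> t) at_top"
    using order_tendstoD(2)[OF F_tendsto_zero, of 1] eventually_ge_at_top by (auto intro: eventually_conj)
  then obtain T where T: "\<forall>t\<ge>T. F t < 1 \<and> t0 + 1 \<le> t" unfolding eventually_at_top_linorder by blast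
  have "perturbed_logistic Z F k (gamma0 m p \<sigma>) T 2"
  proof
    show "\<forall>t\<ge>T. 0 < Z t" using T x_pos z_pos unfolding Z_def by force
    show "\<forall>t\<ge>T. Z t \<le> 2"
    proof (intro allI impI)
      fix t assume "T \<le> t"
      then have "F t < 1" "c * y t < 0" using T y_neg c_pos by (auto simp: mult_pos_neg)
      then show "Z t \<le> 2" unfolding F_def by simp
    qed
  qed (use T Z_logistic_deriv c_pos m p gamma0_pos F_tendsto_zero in \<open>auto simp: k_def\<close>)
  then show ?thesis by (rule perturbed_logistic.tendsto_zero_or_equilibrium)
qed

lemma inverse_x_tendsto_zero: "((\<lambda>t. 1 / x t) \<longlongrightarrow> 0) at_top"
  using tendsto_inverse_0_at_top[OF x_at_top] by (simp add: inverse_eq_divide)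

lemma y_over_x_tendsto_zero: "((\<lambda>t. y t / x t) \<longlongrightarrow> 0) at_top"
proof (rule tendsto_0_le[OF inverse_x_tendsto_zero, where K = "1 / c"])
  show "eventually (\<lambda>t. norm (y t / x t) \<le> norm (1 / x t) * (1 / c)) at_top"
  proof (rule eventually_mono[OF eventually_gt_at_top[of t0]])
    fix t assume "t0 < t"
    then have "-1 < c * y t" "y t < 0" using c_mult_y_gt_minus_one y_neg by auto
    then have "\<bar>y t\<bar> \<le> 1 / c" using c_pos by (auto simp: field_simps abs_if)
    then have "\<bar>y t\<bar> / \<bar>x t\<bar> \<le> (1 / c) / \<bar>x t\<bar>" by (rule divide_right_mono) simp
    then show "norm (y t / x t) \<le> norm (1 / x t) * (1 / c)" by (simp add: abs_divide mult.commute)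
  qed
qed

lemma rescaled_trajectory_tendsto:
  "((\<lambda>t. (1 / x t, y t / x t, z t / x t)) \<longlongrightarrow> (0, 0, 0)) at_top \<or>
   ((\<lambda>t. (1 / x t, y t / x t, z t / x t)) \<longlongrightarrow> (0, 0, gamma0 m p \<sigma>)) at_top"
  using Z_tendsto tendsto_Pair[OF inverse_x_tendsto_zero tendsto_Pair[OF y_over_x_tendsto_zero]]
  unfolding Z_def[abs_def] by blast

end

theorem lemma3p4:
  fixes N :: nat and m p \<sigma> t0 :: real and x y z :: "real \<Rightarrow> real"
  assumes "N \<ge> 1" and "m > 1" and "\<sigma> > 0" and "p > m"
    and "S2_solution_on N m p \<sigma> x y z t0"
    and "x t0 > 0" and "z t0 > 0"
    and "\<forall>t>t0. - (\<sigma> + 2) / (p - m) < y t \<and> y t < 0"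
  shows "((\<lambda>t. (1 / x t, y t / x t, z t / x t)) \<longlongrightarrow> (0, 0, 0)) at_top \<or>
         ((\<lambda>t. (1 / x t, y t / x t, z t / x t)) \<longlongrightarrow> (0, 0, gamma0 m p \<sigma>)) at_top"
proof -
  interpret S2_trapped N m p \<sigma> t0 x y z
    using assms(2-8) by unfold_locales
  show ?thesis by (rule rescaled_trajectory_tendsto)
qed

end
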